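(* Let $(\mathcal{X},d)$ be a finite metric space $\mathcal{X}=\{x_0,x_1,\dots,x_n\}$ ($n\ge 1$, the $x_i$ pairwise distinct), and let $(\mathcal{Y},\|\cdot\|)$ be a non-trivial, strictly convex real Banach space. For every $y\in\operatorname{Lip}^1_0$ there exist an integer $k\le n+1$, points $y^1,\dots,y^k\in\operatorname{ext}(\operatorname{Lip}^1_0)$ and scalars $\lambda_1,\dots,\lambda_k\ge0$ with $\sum_{i=1}^k\lambda_i=1$ such that $y=\sum_{i=1}^k\lambda_i y^i$.
   Context: $\operatorname{Lip}^1_0$ denotes the set of all $y=(y_0,\dots,y_n)\in\mathcal{Y}^{n+1}$ with $y_0=0$ and $\|y_i-y_j\|\le d(x_i,x_j)$ for all $i,j\in\{0,1,\dots,n\}$; it is a convex subset of $\mathcal{Y}^{n+1}$. $\operatorname{ext}(C)$ denotes the set of extreme points of a convex set $C$ (points $y\in C$ such that $y=\lambda y^1+(1-\lambda)y^2$ with $y^1,y^2\in C$, $\lambda\in(0,1)$ forces $y^1=y^2=y$). *)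

theory Defs
  imports "HOL-Analysis.Analysis"
begin

definition strictly_convex_space :: "'b::real_normed_vector itself \<Rightarrow> bool" where
  "strictly_convex_space _ \<longleftrightarrow>
     (\<forall>u v :: 'b. norm u = 1 \<longrightarrow> norm v = 1 \<longrightarrow> u \<noteq> v \<longrightarrow> norm ((1/2) *\<^sub>R (u + v)) < 1)"

text \<open>Lip^1_0: maps from the finite metric space 'a (indexing the coordinates of
  Y^(n+1)) into Y that vanish at the base point x0 and are 1-Lipschitz.\<close>
definition Lip10 :: "'a::{finite,metric_space} \<Rightarrow> ('b::real_normed_vector, 'a) vec set" where
  "Lip10 x0 = {y. y $ x0 = 0 \<and> (\<forall>u v. norm (y $ u - y $ v) \<le> dist u v)}"

end

theory Submission
  imports Defs
begin

text \<open>Fix \<open>e \<noteq> 0\<close> and consider the slice \<open>K = {\<psi> \<in> \<real>\<^sup>X. \<psi> x\<^sub>0 = 0, y + \<psi> e \<in> Lip\<^sup>1\<^sub>0}\<close>,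
  a compact convex set of dimension at most \<open>n\<close> containing \<open>0\<close>. By Krein--Milman and
  Caratheodory, \<open>0\<close> is a convex combination of at most \<open>n + 1\<close> extreme points \<open>\<psi>\<close> of \<open>K\<close>,
  hence \<open>y\<close> is the same combination of the maps \<open>w = y + \<psi> e\<close>. Each such \<open>w\<close> is extreme in
  \<open>Lip\<^sup>1\<^sub>0\<close>: if \<open>w\<close> is the midpoint of \<open>a, b \<in> Lip\<^sup>1\<^sub>0\<close>, strict convexity
  propagates \<open>a = b\<close> from \<open>x\<^sub>0\<close> along every pair on which \<open>w\<close> is tight,
  \<open>\<parallel>w x\<^sub>i - w x\<^sub>j\<parallel> = d(x\<^sub>i, x\<^sub>j)\<close>; and extremality of \<open>\<psi>\<close> in \<open>K\<close> forces
  every set containing \<open>x\<^sub>0\<close> and closed under tight pairs to be everything, since otherwise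
  \<open>\<psi>\<close> could be moved in both directions on its complement.\<close>

lemma extreme_point_of_convex_midpointI:
  fixes S :: "'a::real_vector set"
  assumes "convex S" "x \<in> S"
    and midpoint_eq: "\<And>a b. a \<in> S \<Longrightarrow> b \<in> S \<Longrightarrow> x = midpoint a b \<Longrightarrow> a = b"
  shows "x extreme_point_of S"
  unfolding extreme_point_of_def
proof (intro conjI ballI notI)
  fix a b assume "a \<in> S" "b \<in> S" "x \<in> open_segment a b"
  then obtain t where "a \<noteq> b" "0 < t" "t < 1" and x: "x = (1 - t) *\<^sub>R a + t *\<^sub>R b"
    by (auto simp: in_segment)
  define s where "s = min t (1 - t)"
  define d where "d = s *\<^sub>R (b - a)"
  have "s > 0" "t - s \<ge> 0" "t + s \<le> 1"
    using \<open>0 < t\<close> \<open>t < 1\<close> by (auto simp: s_def)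
  have "x - d = (1 - (t - s)) *\<^sub>R a + (t - s) *\<^sub>R b" "x + d = (1 - (t + s)) *\<^sub>R a + (t + s) *\<^sub>R b"
    by (simp_all add: x d_def algebra_simps)
  then have "x - d \<in> S" "x + d \<in> S"
    using \<open>t - s \<ge> 0\<close> \<open>t + s \<le> 1\<close> \<open>s > 0\<close>
    by (auto intro!: convexD_alt[OF \<open>convex S\<close> \<open>a \<in> S\<close> \<open>b \<in> S\<close>])
  moreover have "x = midpoint (x - d) (x + d)"
    by (simp add: midpoint_def flip: scaleR_2)
  ultimately have "x - d = x + d"
    by (rule midpoint_eq)
  moreover have "(2::real) *\<^sub>R d = (x + d) - (x - d)"
    by (simp add: scaleR_2)
  ultimately have "d = 0"
    by simp
  then show False
    using \<open>s > 0\<close> \<open>a \<noteq> b\<close> by (simp add: d_def)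
qed (fact assms)

lemma strictly_convex_space_midpoint_eq:
  fixes p q :: "'b::real_normed_vector"
  assumes "strictly_convex_space TYPE('b)"
    and "norm p \<le> d" "norm q \<le> d" "norm (midpoint p q) = d"
  shows "p = q"
proof (rule ccontr)
  assume "p \<noteq> q"
  have "d \<le> (norm p + norm q) / 2"
    using assms(4) norm_triangle_ineq[of p q] by (simp add: midpoint_def)
  then have "norm p = d" and "norm q = d"
    using assms(2,3) by auto
  then have "d > 0"
    using \<open>p \<noteq> q\<close> by (metis norm_eq_zero norm_ge_zero order_le_less)
  have "norm (midpoint (p /\<^sub>R d) (q /\<^sub>R d)) < 1"
    using assms(1) \<open>p \<noteq> q\<close> \<open>norm p = d\<close> \<open>norm q = d\<close> \<open>d > 0\<close>
    unfolding strictly_convex_space_def midpoint_def by simp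
  moreover have "midpoint (p /\<^sub>R d) (q /\<^sub>R d) = midpoint p q /\<^sub>R d"
    by (simp add: midpoint_def algebra_simps)
  ultimately show False
    using assms(4) \<open>d > 0\<close> by simp
qed

lemma extreme_points_caratheodory:
  fixes K :: "'a::euclidean_space set"
  assumes "compact K" "convex K" "x \<in> K"
  obtains S where "finite S" "S \<subseteq> {p. p extreme_point_of K}" "card S \<le> aff_dim K + 1"
    "x \<in> convex hull S"
proof -
  let ?E = "{p. p extreme_point_of K}"
  have "x \<in> convex hull ?E"
    using Krein_Milman_Minkowski[OF assms(1,2)] assms(3) by simp
  then obtain S where "finite S" "S \<subseteq> ?E" "card S \<le> aff_dim ?E + 1" "x \<in> convex hull S"
    using caratheodory_aff_dim[of ?E] by auto
  moreover have "aff_dim ?E \<le> aff_dim K"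
    by (rule aff_dim_subset) (auto simp: extreme_point_of_def)
  ultimately show ?thesis
    by (intro that[of S]) simp_all
qed

lemma convex_hull_finite_nat_indexed:
  assumes "finite S" "x \<in> convex hull S"
  obtains ys :: "nat \<Rightarrow> 'a::real_vector" and l :: "nat \<Rightarrow> real"
  where "\<forall>i\<in>{1..card S}. ys i \<in> S \<and> 0 \<le> l i" "(\<Sum>i=1..card S. l i) = 1"
    "x = (\<Sum>i=1..card S. l i *\<^sub>R ys i)"
proof -
  obtain u where u: "\<forall>p\<in>S. 0 \<le> u p" "sum u S = 1" "(\<Sum>p\<in>S. u p *\<^sub>R p) = x"
    using assms(2) unfolding convex_hull_finite[OF assms(1)] by blast
  obtain g where g: "bij_betw g {1..card S} S"
    using ex_bij_betw_nat_finite_1[OF assms(1)] by blast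
  show ?thesis
  proof (rule that[of g "u \<circ> g"])
    show "\<forall>i\<in>{1..card S}. g i \<in> S \<and> 0 \<le> (u \<circ> g) i"
      using bij_betwE[OF g] u(1) by auto
    show "(\<Sum>i=1..card S. (u \<circ> g) i) = 1"
      using sum.reindex_bij_betw[OF g, of u] u(2) by simp
    show "x = (\<Sum>i=1..card S. (u \<circ> g) i *\<^sub>R g i)"
      using sum.reindex_bij_betw[OF g, of "\<lambda>p. u p *\<^sub>R p"] u(3) by simp
  qed
qed

lemma convex_Lip10: "convex (Lip10 x0 :: ('b::real_normed_vector, 'a::{finite,metric_space}) vec set)"
  unfolding convex_def Lip10_def
proof (clarsimp)
  fix a b :: "('b, 'a) vec" and s t :: real and i j
  assume a: "\<forall>i j. norm (a $ i - a $ j) \<le> dist i j" and b: "\<forall>i j. norm (b $ i - b $ j) \<le> dist i j"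
    and "0 \<le> s" "0 \<le> t" "s + t = 1"
  have "norm (s *\<^sub>R (a $ i - a $ j) + t *\<^sub>R (b $ i - b $ j)) \<le> s * dist i j + t * dist i j"
    using a b \<open>0 \<le> s\<close> \<open>0 \<le> t\<close>
    by (intro norm_triangle_le add_mono) (auto intro: mult_left_mono)
  then show "norm (s *\<^sub>R a $ i + t *\<^sub>R b $ i - (s *\<^sub>R a $ j + t *\<^sub>R b $ j)) \<le> dist i j"
    using \<open>s + t = 1\<close> by (simp add: algebra_simps flip: distrib_right)
qed

lemma closed_Lip10: "closed (Lip10 x0)"
  unfolding Lip10_def
  by (intro closed_Collect_conj closed_Collect_all closed_Collect_le closed_Collect_eq continuous_intros)

lemma norm_le_dist_if_Lip10: "w \<in> Lip10 x0 \<Longrightarrow> norm (w $ i) \<le> dist i x0"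
  unfolding Lip10_def by (metis (mono_tags, lifting) diff_zero mem_Collect_eq)

lemma bounded_Lip10: "bounded (Lip10 x0)"
  unfolding bounded_iff
proof (intro exI ballI)
  fix w assume "w \<in> Lip10 x0"
  have "norm w \<le> (\<Sum>i\<in>UNIV. norm (w $ i))"
    by (simp add: norm_vec_def L2_set_le_sum)
  also have "\<dots> \<le> (\<Sum>i\<in>UNIV. dist i x0)"
    using \<open>w \<in> Lip10 x0\<close> by (intro sum_mono norm_le_dist_if_Lip10)
  finally show "norm w \<le> (\<Sum>i\<in>UNIV. dist i x0)" .
qed

definition vec_along :: "'b::real_normed_vector \<Rightarrow> (real, 'a::finite) vec \<Rightarrow> ('b, 'a) vec" where
  "vec_along e \<psi> = (\<chi> i. \<psi> $ i *\<^sub>R e)"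

lemma vec_along_component [simp]: "vec_along e \<psi> $ i = \<psi> $ i *\<^sub>R e"
  by (simp add: vec_along_def)

lemma linear_vec_along: "linear (vec_along e)"
  by (intro linearI) (simp_all add: vec_eq_iff algebra_simps)

lemma norm_vec_along: "norm (vec_along e \<psi>) = norm \<psi> * norm e"
  by (simp add: norm_vec_def L2_set_left_distrib)

lemma convex_combination_plus_vec_along:
  assumes "(\<Sum>i\<in>I. l i) = 1"
  shows "(\<Sum>i\<in>I. l i *\<^sub>R (y + vec_along e (\<psi> i))) = y + vec_along e (\<Sum>i\<in>I. l i *\<^sub>R \<psi> i)"
  using assms
  by (simp add: scaleR_add_right sum.distrib linear_sum[OF linear_vec_along]
      linear_scale[OF linear_vec_along] flip: scaleR_sum_left)

text \<open>Pinning \<open>\<psi> $ x0 = 0\<close> makes the slice at most \<open>n\<close>-dimensional, which is where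
  the bound \<open>n + 1\<close> on the number of extreme points comes from.\<close>
definition Lip10_slice :: "'a::{finite,metric_space} \<Rightarrow> ('b::real_normed_vector, 'a) vec \<Rightarrow> 'b \<Rightarrow> (real, 'a) vec set" where
  "Lip10_slice x0 y e = {\<psi>. \<psi> $ x0 = 0 \<and> y + vec_along e \<psi> \<in> Lip10 x0}"

lemma zero_in_Lip10_slice: "y \<in> Lip10 x0 \<Longrightarrow> 0 \<in> Lip10_slice x0 y e"
  by (simp add: Lip10_slice_def linear_0[OF linear_vec_along])

lemma convex_Lip10_slice:
  fixes x0 :: "'a::{finite,metric_space}" and y :: "('b::real_normed_vector, 'a) vec"
  shows "convex (Lip10_slice x0 y e)"
proof -
  have "convex {\<psi>::(real, 'a) vec. \<psi> $ x0 = 0}"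
    using convex_hyperplane[of "axis x0 (1::real)" 0] by (simp add: inner_axis')
  moreover have "Lip10_slice x0 y e = {\<psi>. \<psi> $ x0 = 0} \<inter> vec_along e -` ((+) (- y) ` Lip10 x0)"
    by (force simp: Lip10_slice_def)
  ultimately show ?thesis
    by (metis convex_Int convex_linear_vimage convex_translation convex_Lip10 linear_vec_along)
qed

lemma compact_Lip10_slice:
  fixes x0 :: "'a::{finite,metric_space}" and y :: "('b::real_normed_vector, 'a) vec"
  assumes "e \<noteq> 0"
  shows "compact (Lip10_slice x0 y e)"
proof -
  obtain B where B: "\<And>w :: ('b, 'a) vec. w \<in> Lip10 x0 \<Longrightarrow> norm w \<le> B"
    using bounded_Lip10 unfolding bounded_iff by blast
  have "norm \<psi> \<le> (B + norm y) / norm e" if "\<psi> \<in> Lip10_slice x0 y e" for \<psi>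
  proof -
    have "norm \<psi> * norm e = norm ((y + vec_along e \<psi>) - y)"
      by (simp add: norm_vec_along)
    also have "\<dots> \<le> B + norm y"
      using B[of "y + vec_along e \<psi>"] that norm_triangle_ineq4[of "y + vec_along e \<psi>" y]
      by (simp add: Lip10_slice_def)
    finally show ?thesis
      using assms by (simp add: pos_le_divide_eq)
  qed
  then have "bounded (Lip10_slice x0 y e)"
    unfolding bounded_iff by blast
  moreover have "closed ((\<lambda>\<psi>. y + vec_along e \<psi>) -` Lip10 x0)"
    using linear_vec_along[of e]
    by (intro continuous_closed_vimage closed_Lip10 continuous_intros linear_continuous_at)
      (simp add: linear_conv_bounded_linear)
  then have "closed (Lip10_slice x0 y e)"
    unfolding Lip10_slice_def vimage_def by (intro closed_Collect_conj closed_Collect_eq continuous_intros)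
  ultimately show ?thesis
    by (simp add: compact_eq_bounded_closed)
qed

lemma aff_dim_Lip10_slice:
  fixes x0 :: "'a::{finite,metric_space}" and y :: "('b::real_normed_vector, 'a) vec"
  shows "aff_dim (Lip10_slice x0 y e) \<le> int CARD('a) - 1"
proof -
  have "Lip10_slice x0 y e \<subseteq> {\<psi>. axis x0 1 \<bullet> \<psi> = 0}"
    by (auto simp: Lip10_slice_def inner_axis')
  then have "aff_dim (Lip10_slice x0 y e) \<le> aff_dim {\<psi>::(real, 'a) vec. axis x0 1 \<bullet> \<psi> = 0}"
    by (rule aff_dim_subset)
  also have "\<dots> = int CARD('a) - 1"
    by (subst aff_dim_hyperplane) (auto simp: axis_eq_0_iff)
  finally show ?thesis .
qed

definition tight_closed :: "('b::real_normed_vector, 'a::{finite,metric_space}) vec \<Rightarrow> 'a set \<Rightarrow> bool" where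
  "tight_closed w S \<longleftrightarrow> (\<forall>i\<in>S. \<forall>j. norm (w $ i - w $ j) = dist i j \<longrightarrow> j \<in> S)"

lemma tight_closed_agreement_set:
  fixes a b :: "('b::real_normed_vector, 'a::{finite,metric_space}) vec"
  assumes "strictly_convex_space TYPE('b)" "a \<in> Lip10 x0" "b \<in> Lip10 x0"
  shows "tight_closed (midpoint a b) {i. a $ i = b $ i}"
  unfolding tight_closed_def
proof (intro ballI allI impI)
  fix i j assume "i \<in> {i. a $ i = b $ i}" and tight: "norm (midpoint a b $ i - midpoint a b $ j) = dist i j"
  have "midpoint a b $ i - midpoint a b $ j = midpoint (a $ i - a $ j) (b $ i - b $ j)"
    by (simp add: midpoint_def algebra_simps)
  moreover have "norm (a $ i - a $ j) \<le> dist i j" "norm (b $ i - b $ j) \<le> dist i j"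
    using assms(2,3) by (simp_all add: Lip10_def)
  ultimately have "a $ i - a $ j = b $ i - b $ j"
    using tight by (intro strictly_convex_space_midpoint_eq[OF assms(1)]) simp_all
  with \<open>i \<in> {i. a $ i = b $ i}\<close> show "j \<in> {i. a $ i = b $ i}"
    by simp
qed

lemma Lip10_tight_closed_slack:
  fixes w :: "('b::real_normed_vector, 'a::{finite,metric_space}) vec"
  assumes "w \<in> Lip10 x0" "tight_closed w S"
  obtains \<delta> where "\<delta> > 0" "\<And>i j. i \<in> S \<Longrightarrow> j \<notin> S \<Longrightarrow> norm (w $ i - w $ j) + \<delta> \<le> dist i j"
proof
  have slack: "norm (w $ i - w $ j) < dist i j" if "i \<in> S" "j \<notin> S" for i j
  proof -
    have "norm (w $ i - w $ j) \<le> dist i j"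
      using assms(1) by (simp add: Lip10_def)
    moreover have "norm (w $ i - w $ j) \<noteq> dist i j"
      using assms(2) that by (auto simp: tight_closed_def)
    ultimately show ?thesis
      by linarith
  qed
  define \<delta> where "\<delta> = Min (insert 1 {dist i j - norm (w $ i - w $ j) | i j. i \<in> S \<and> j \<notin> S})"
  have fin: "finite {dist i j - norm (w $ i - w $ j) | i j. i \<in> S \<and> j \<notin> S}"
    using finite_image_set2[of "\<lambda>i. i \<in> S" "\<lambda>j. j \<notin> S"] by simp
  show "\<delta> > 0"
    unfolding \<delta>_def using fin slack by (subst Min_gr_iff) auto
  fix i j assume "i \<in> S" "j \<notin> S"
  then have "\<delta> \<le> dist i j - norm (w $ i - w $ j)"
    unfolding \<delta>_def using fin by (intro Min_le) auto
  then show "norm (w $ i - w $ j) + \<delta> \<le> dist i j"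
    by simp
qed

lemma Lip10_perturb_off_tight_closed:
  fixes w :: "('b::real_normed_vector, 'a::{finite,metric_space}) vec"
  assumes "w \<in> Lip10 x0" "x0 \<in> S" "tight_closed w S"
  obtains \<delta> where "\<delta> > 0" "\<And>d. norm d \<le> \<delta> \<Longrightarrow> w + (\<chi> i. if i \<in> S then 0 else d) \<in> Lip10 x0"
proof -
  obtain \<delta> where "\<delta> > 0" and \<delta>_le: "\<And>i j. i \<in> S \<Longrightarrow> j \<notin> S \<Longrightarrow> norm (w $ i - w $ j) + \<delta> \<le> dist i j"
    using Lip10_tight_closed_slack[OF assms(1,3)] by blast
  show ?thesis
  proof (rule that[OF \<open>\<delta> > 0\<close>])
    fix d :: 'b assume "norm d \<le> \<delta>"
    define w' where "w' = w + (\<chi> i. if i \<in> S then 0 else d)"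
    have cross: "norm (w' $ i - w' $ j) \<le> dist i j" if "i \<in> S" "j \<notin> S" for i j
    proof -
      have "norm (w' $ i - w' $ j) = norm ((w $ i - w $ j) - d)"
        using that by (simp add: w'_def algebra_simps)
      also have "\<dots> \<le> norm (w $ i - w $ j) + norm d"
        by (rule norm_triangle_ineq4)
      finally show ?thesis
        using \<delta>_le[OF that] \<open>norm d \<le> \<delta>\<close> by linarith
    qed
    have "norm (w' $ i - w' $ j) \<le> dist i j" for i j
    proof (cases "i \<in> S \<longleftrightarrow> j \<in> S")
      case True
      then have "w' $ i - w' $ j = w $ i - w $ j"
        by (auto simp: w'_def)
      then show ?thesis
        using assms(1) by (simp add: Lip10_def)
    next
      case False
      then show ?thesis
        using cross cross[of j i] by (metis dist_commute norm_minus_commute)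
    qed
    then show "w + (\<chi> i. if i \<in> S then 0 else d) \<in> Lip10 x0"
      using assms(1,2) by (simp add: Lip10_def w'_def)
  qed
qed

lemma tight_closed_eq_UNIV_if_extreme_point_of_Lip10_slice:
  fixes x0 :: "'a::{finite,metric_space}" and y :: "('b::real_normed_vector, 'a) vec"
  assumes "e \<noteq> 0" "\<phi> extreme_point_of Lip10_slice x0 y e"
    and "x0 \<in> S" "tight_closed (y + vec_along e \<phi>) S"
  shows "S = UNIV"
proof (rule ccontr)
  assume "S \<noteq> UNIV"
  then obtain j where "j \<notin> S"
    by auto
  have \<phi>: "\<phi> \<in> Lip10_slice x0 y e"
    using assms(2) by (simp add: extreme_point_of_def)
  then have "y + vec_along e \<phi> \<in> Lip10 x0"
    by (simp add: Lip10_slice_def)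
  then obtain \<delta> where "\<delta> > 0"
    and perturb: "\<And>d. norm d \<le> \<delta> \<Longrightarrow> y + vec_along e \<phi> + (\<chi> i. if i \<in> S then 0 else d) \<in> Lip10 x0"
    using Lip10_perturb_off_tight_closed assms(3,4) by blast
  define ind :: "(real, 'a) vec" where "ind = (\<chi> i. if i \<in> S then 0 else 1)"
  define c where "c = \<delta> / norm e"
  have "c > 0"
    using \<open>\<delta> > 0\<close> assms(1) by (simp add: c_def)
  have shifted: "\<phi> + s *\<^sub>R ind \<in> Lip10_slice x0 y e" if "\<bar>s\<bar> = c" for s
  proof -
    have "norm (s *\<^sub>R e) \<le> \<delta>"
      using that assms(1) by (simp add: c_def)
    then have "y + vec_along e \<phi> + (\<chi> i. if i \<in> S then 0 else s *\<^sub>R e) \<in> Lip10 x0"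
      by (rule perturb)
    moreover have "y + vec_along e \<phi> + (\<chi> i. if i \<in> S then 0 else s *\<^sub>R e) = y + vec_along e (\<phi> + s *\<^sub>R ind)"
      by (simp add: vec_eq_iff ind_def algebra_simps)
    ultimately have "y + vec_along e (\<phi> + s *\<^sub>R ind) \<in> Lip10 x0"
      by simp
    moreover have "(\<phi> + s *\<^sub>R ind) $ x0 = 0"
      using \<phi> assms(3) by (simp add: Lip10_slice_def ind_def)
    ultimately show ?thesis
      by (simp add: Lip10_slice_def)
  qed
  have "\<phi> = midpoint (\<phi> + c *\<^sub>R ind) (\<phi> + (- c) *\<^sub>R ind)"
    by (simp add: midpoint_def vec_eq_iff field_simps)
  moreover have "\<phi> + c *\<^sub>R ind \<noteq> \<phi> + (- c) *\<^sub>R ind"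
    using \<open>c > 0\<close> \<open>j \<notin> S\<close> by (auto simp: vec_eq_iff ind_def)
  ultimately have "\<phi> \<in> open_segment (\<phi> + c *\<^sub>R ind) (\<phi> + (- c) *\<^sub>R ind)"
    by (metis midpoint_in_open_segment)
  moreover have "\<phi> + c *\<^sub>R ind \<in> Lip10_slice x0 y e" "\<phi> + (- c) *\<^sub>R ind \<in> Lip10_slice x0 y e"
    using shifted[of c] shifted[of "- c"] \<open>c > 0\<close> by simp_all
  ultimately show False
    using assms(2) unfolding extreme_point_of_def by blast
qed

lemma extreme_point_of_Lip10_if_extreme_point_of_Lip10_slice:
  fixes x0 :: "'a::{finite,metric_space}" and y :: "('b::real_normed_vector, 'a) vec"
  assumes "strictly_convex_space TYPE('b)" "e \<noteq> 0" "\<phi> extreme_point_of Lip10_slice x0 y e"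
  shows "y + vec_along e \<phi> extreme_point_of Lip10 x0"
proof (rule extreme_point_of_convex_midpointI[OF convex_Lip10])
  show "y + vec_along e \<phi> \<in> Lip10 x0"
    using assms(3) by (simp add: extreme_point_of_def Lip10_slice_def)
  fix a b assume "a \<in> Lip10 x0" "b \<in> Lip10 x0" and mid: "y + vec_along e \<phi> = midpoint a b"
  have "tight_closed (y + vec_along e \<phi>) {i. a $ i = b $ i}"
    unfolding mid using tight_closed_agreement_set[OF assms(1) \<open>a \<in> Lip10 x0\<close> \<open>b \<in> Lip10 x0\<close>] .
  moreover have "x0 \<in> {i. a $ i = b $ i}"
    using \<open>a \<in> Lip10 x0\<close> \<open>b \<in> Lip10 x0\<close> by (simp add: Lip10_def)
  ultimately have "{i. a $ i = b $ i} = UNIV"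
    by (intro tight_closed_eq_UNIV_if_extreme_point_of_Lip10_slice[OF assms(2,3)])
  then show "a = b"
    by (simp add: vec_eq_iff set_eq_iff)
qed

theorem theorem2:
  fixes x0 :: "'a::{finite,metric_space}"
    and y :: "('b::banach, 'a) vec"
  assumes "CARD('a) \<ge> 2"
    and "\<exists>v::'b. v \<noteq> 0"
    and "strictly_convex_space TYPE('b)"
    and "y \<in> Lip10 x0"
  shows "\<exists>k::nat. k \<le> CARD('a) \<and>
           (\<exists>ys :: nat \<Rightarrow> ('b, 'a) vec. \<exists>l :: nat \<Rightarrow> real.
              (\<forall>i\<in>{1..k}. ys i extreme_point_of (Lip10 x0) \<and> l i \<ge> 0) \<and>
              (\<Sum>i=1..k. l i) = 1 \<and>
              y = (\<Sum>i=1..k. l i *\<^sub>R ys i))"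
proof -
  obtain e :: 'b where "e \<noteq> 0"
    using assms(2) by blast
  let ?K = "Lip10_slice x0 y e"
  obtain S where "finite S" and S_ext: "S \<subseteq> {\<psi>. \<psi> extreme_point_of ?K}"
    and "card S \<le> aff_dim ?K + 1" and "0 \<in> convex hull S"
    using extreme_points_caratheodory[OF compact_Lip10_slice[OF \<open>e \<noteq> 0\<close>] convex_Lip10_slice
        zero_in_Lip10_slice[OF assms(4)]] .
  have "card S \<le> CARD('a)"
    using \<open>card S \<le> aff_dim ?K + 1\<close> aff_dim_Lip10_slice[of x0 y e] by linarith
  obtain \<psi> l where \<psi>: "\<forall>i\<in>{1..card S}. \<psi> i \<in> S \<and> 0 \<le> l i"
    and l: "(\<Sum>i=1..card S. l i) = 1" and zero: "0 = (\<Sum>i=1..card S. l i *\<^sub>R \<psi> i)"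
    using convex_hull_finite_nat_indexed[OF \<open>finite S\<close> \<open>0 \<in> convex hull S\<close>] .
  have ext: "\<forall>i\<in>{1..card S}. y + vec_along e (\<psi> i) extreme_point_of Lip10 x0 \<and> 0 \<le> l i"
    using \<psi> S_ext extreme_point_of_Lip10_if_extreme_point_of_Lip10_slice[OF assms(3) \<open>e \<noteq> 0\<close>]
    by blast
  have "y = (\<Sum>i=1..card S. l i *\<^sub>R (y + vec_along e (\<psi> i)))"
    unfolding convex_combination_plus_vec_along[OF l] zero[symmetric]
    by (simp add: linear_0[OF linear_vec_along])
  with \<open>card S \<le> CARD('a)\<close> ext l show ?thesis
    by (intro exI[of _ "card S"] exI[of _ "\<lambda>i. y + vec_along e (\<psi> i)"] exI[of _ l] conjI)
qed

end
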